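(* Let $4\le p<n$ and let $K_{n+1}=(V,E)$ be the complete graph on $V=\{0,\dots,n\}$. For every edge $e\in E\setminus\{[0,n]\}$, the nonnegativity constraint $y_e\ge 0$ defines a facet of $P^p_{[0,n]}(K_{n+1})$.
   Context: For an undirected graph $G=(V,E)$ with $V=\{0,\dots,n\}$, a $[0,n]$-$p$-path is a simple (undirected) path from $0$ to $n$ with exactly $p$ edges, and $P^p_{[0,n]}(G)\subseteq\mathbb{R}^E$ is the convex hull of the incidence vectors of all $[0,n]$-$p$-paths in $G$. A facet is a face of dimension $\dim P^p_{[0,n]}(K_{n+1})-1$. *)

theory Defs
  imports "HOL-Analysis.Analysis"
begin

definition Kedges :: "nat \<Rightarrow> nat set set" where
  "Kedges n = {{i, j} | i j. i < j \<and> j \<le> n}"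

definition is_path_0n :: "nat \<Rightarrow> nat \<Rightarrow> nat list \<Rightarrow> bool" where
  "is_path_0n n p vs \<longleftrightarrow> length vs = p + 1 \<and> distinct vs \<and> set vs \<subseteq> {0..n}
      \<and> hd vs = 0 \<and> last vs = n"

definition path_edges :: "nat list \<Rightarrow> nat set set" where
  "path_edges vs = {{vs ! i, vs ! Suc i} | i. Suc i < length vs}"

text \<open>The p-path polytope P^p_{[0,n]}(K_{n+1}) in R^E, where the edge set E is
  indexed by a finite type 'e via a bijection ed :: 'e => E.\<close>
definition path_polytope :: "nat \<Rightarrow> nat \<Rightarrow> ('e::finite \<Rightarrow> nat set) \<Rightarrow> (real ^ 'e) set" where
  "path_polytope n p ed = convex hull
     {(\<chi> e. if ed e \<in> path_edges vs then 1 else 0) | vs. is_path_0n n p vs}"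

end

(* The inequality y_e >= 0 holds at every vertex of P = P^p_[0,n](K_{n+1}), is tight at a p-path
   avoiding e and strict at one using e, so it defines a nonempty proper face F. This face is a facet
   as soon as every linear functional that is constant on the vertices of F is also constant on the
   remaining vertices, the paths through e: then P lies in the affine hull of F and one more vertex.

   Read such a functional as a cost C on the edges. Exchanging two inner vertices next to an end of
   paths avoiding e shows that, away from e, C takes one value on the edges at 0, one value on the edges
   at n and one value on the edges between inner vertices. A path through e has one edge at 0, one at n,
   p - 2 inner edges, and contains e, so all paths through e have the same cost. Exchanges next to n are
   exchanges next to 0 after reversing the paths and swapping the labels 0 and n. *)
theory Submission
  imports Defs
begin

section \<open>Walks and their edge costs\<close>

fun walk_edges :: "'a list \<Rightarrow> 'a set set" where
  "walk_edges (x # y # zs) = insert {x, y} (walk_edges (y # zs))"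
| "walk_edges _ = {}"

fun walk_cost :: "('a set \<Rightarrow> 'b::comm_monoid_add) \<Rightarrow> 'a list \<Rightarrow> 'b" where
  "walk_cost C (x # y # zs) = C {x, y} + walk_cost C (y # zs)"
| "walk_cost C _ = 0"

lemma path_edges_Cons_Cons: "path_edges (x # y # zs) = insert {x, y} (path_edges (y # zs))"
  unfolding path_edges_def
  by (auto simp: less_Suc_eq_0_disj intro: exI[of _ 0]) (metis nth_Cons_Suc)

lemma path_edges_eq_walk_edges: "path_edges xs = walk_edges xs"
proof (induction xs rule: walk_edges.induct)
  case (1 x y zs)
  then show ?case by (simp add: path_edges_Cons_Cons)
qed (auto simp: path_edges_def)

lemma walk_edges_snoc:
  "xs \<noteq> [] \<Longrightarrow> walk_edges (xs @ [y]) = insert {last xs, y} (walk_edges xs)"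
  by (induction xs rule: walk_edges.induct) auto

lemma walk_cost_snoc:
  "xs \<noteq> [] \<Longrightarrow> walk_cost C (xs @ [y]) = walk_cost C xs + C {last xs, y}"
  by (induction xs rule: walk_edges.induct) (auto simp: add_ac)

lemma walk_edges_subset: "f \<in> walk_edges xs \<Longrightarrow> f \<subseteq> set xs"
  by (induction xs rule: walk_edges.induct) auto

lemma mem_walk_edgesE:
  assumes "f \<in> walk_edges xs" "distinct xs"
  obtains x y where "f = {x, y}" "x \<in> set xs" "y \<in> set xs" "x \<noteq> y"
  using assms by (induction xs rule: walk_edges.induct) auto

lemma finite_walk_edges [simp]: "finite (walk_edges xs)"
  by (induction xs rule: walk_edges.induct) auto

lemma walk_cost_eq_sum: "distinct xs \<Longrightarrow> walk_cost C xs = sum C (walk_edges xs)"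
proof (induction xs rule: walk_edges.induct)
  case (1 x y zs)
  then have "{x, y} \<notin> walk_edges (y # zs)"
    using walk_edges_subset by fastforce
  with 1 show ?case by simp
qed auto

lemma walk_edges_rev: "walk_edges (rev xs) = walk_edges xs"
proof (induction xs rule: walk_edges.induct)
  case (1 x y zs)
  then show ?case
    using walk_edges_snoc[of "rev (y # zs)" x] by (simp add: insert_commute)
qed auto

lemma walk_cost_rev: "walk_cost C (rev xs) = walk_cost C xs"
proof (induction xs rule: walk_edges.induct)
  case (1 x y zs)
  then show ?case
    using walk_cost_snoc[of "rev (y # zs)" C x] by (simp add: insert_commute add.commute)
qed auto

lemma walk_edges_map: "walk_edges (map f xs) = image f ` walk_edges xs"
  by (induction xs rule: walk_edges.induct) auto

lemma walk_cost_map: "walk_cost C (map f xs) = walk_cost (\<lambda>e. C (f ` e)) xs"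
  by (induction xs rule: walk_edges.induct) auto

lemma walk_edges_0n_cases:
  assumes "e \<in> walk_edges (0 # xs @ [n])" "xs \<noteq> []" "distinct xs" "set xs \<subseteq> {1..<n}"
  obtains (start) u where "u \<in> {1..<n}" "e = {0, u}"
    | (finish) u where "u \<in> {1..<n}" "e = {u, n}"
    | (inner) x y where "x \<in> {1..<n}" "y \<in> {1..<n}" "x \<noteq> y" "e = {x, y}"
proof -
  obtain x ys where xs: "xs = x # ys"
    using assms(2) by (cases xs) auto
  then have "walk_edges (0 # xs @ [n]) = insert {0, hd xs} (insert {last xs, n} (walk_edges xs))"
    using walk_edges_snoc[of xs n] by simp
  then consider "e = {0, hd xs}" | "e = {last xs, n}" | "e \<in> walk_edges xs"
    using assms(1) by blast
  then show ?thesis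
  proof cases
    case 1
    then show ?thesis using start[of x] xs assms(4) by simp
  next
    case 2
    moreover have "last xs \<in> {1..<n}"
      using assms(2,4) last_in_set by blast
    ultimately show ?thesis using finish by blast
  next
    case 3
    then obtain x y where "e = {x, y}" "x \<in> set xs" "y \<in> set xs" "x \<noteq> y"
      using assms(3) by (rule mem_walk_edgesE)
    then show ?thesis using inner assms(4) by blast
  qed
qed

lemma walk_cost_eq_if_agree_off_edge:
  assumes "distinct xs" "E \<in> walk_edges xs"
    and "\<And>e. e \<in> walk_edges xs \<Longrightarrow> e \<noteq> E \<Longrightarrow> C e = G e"
  shows "walk_cost C xs = walk_cost G xs + (C E - G E :: 'b::ab_group_add)"
proof -
  have "walk_cost C xs = C E + sum C (walk_edges xs - {E})"
    using assms(1,2) by (simp add: walk_cost_eq_sum sum.remove)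
  also have "sum C (walk_edges xs - {E}) = sum G (walk_edges xs - {E})"
    using assms(3) by (intro sum.cong) auto
  also have "C E + \<dots> = walk_cost G xs + (C E - G E)"
    using assms(1,2) by (simp add: walk_cost_eq_sum sum.remove algebra_simps)
  finally show ?thesis .
qed

lemma walk_cost_of_edge_classes:
  fixes a b l :: real and n :: nat
  defines "G \<equiv> \<lambda>e. if 0 \<in> e then a else if n \<in> e then b else l"
  assumes "xs \<noteq> []" "0 \<notin> set xs" "n \<notin> set xs" "n \<noteq> 0"
  shows "walk_cost G (0 # xs @ [n]) = a + (real (length xs) - 1) * l + b"
proof -
  have "walk_cost G (y # ys @ [n]) = real (length ys) * l + b"
    if "y \<notin> {0, n}" "0 \<notin> set ys" "n \<notin> set ys" for y ys
    using that assms(5) by (induction ys arbitrary: y) (auto simp: G_def algebra_simps)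
  with assms(2-5) show ?thesis by (cases xs) (auto simp: G_def)
qed

section \<open>Walks avoiding or using a given edge\<close>

lemma obtain_distinct_list:
  assumes "finite A" "L \<le> card A"
  obtains T where "length T = L" "distinct T" "set T \<subseteq> A"
proof -
  obtain B where "B \<subseteq> A" "card B = L"
    using obtain_subset_with_card_n[OF assms(2)] by blast
  moreover obtain T where "set T = B" "distinct T"
    using finite_distinct_list[of B] assms(1) \<open>B \<subseteq> A\<close> finite_subset by blast
  ultimately show ?thesis
    using that distinct_card by metis
qed

lemma obtain_avoiding_walk:
  assumes "finite A" "a \<notin> A" "z \<notin> A" "a \<noteq> z" "L \<le> card A"
    and "L < card A \<or> \<not> E \<subseteq> A \<union> {a, z}" and "L = 0 \<longrightarrow> E \<noteq> {a, z}"
  obtains T where "length T = L" "distinct T" "set T \<subseteq> A" "E \<notin> walk_edges (a # T @ [z])"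
  using assms
proof (induction L arbitrary: a A thesis)
  case 0
  then show ?case by auto
next
  case (Suc L)
  define bad where "bad x \<longleftrightarrow> E = {a, x} \<or> (L = 0 \<and> E = {x, z})" for x
  have at_most_one_bad: "x = y" if "x \<in> A" "y \<in> A" "bad x" "bad y" for x y
    using that Suc.prems(3,4) unfolding bad_def by (auto simp: doubleton_eq_iff)
  obtain x where x: "x \<in> A" "\<not> bad x"
  proof (cases "Suc L < card A")
    case True
    then obtain B where "B \<subseteq> A" "card B = 2"
      using obtain_subset_with_card_n[of 2 A] by force
    then obtain x1 x2 where "x1 \<in> A" "x2 \<in> A" "x1 \<noteq> x2"
      by (auto simp: card_2_iff)
    then show ?thesis using that at_most_one_bad by blast
  next
    case False
    then have "\<not> E \<subseteq> A \<union> {a, z}" "A \<noteq> {}" using Suc.prems(6,7) by auto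
    then show ?thesis using that unfolding bad_def by blast
  qed
  have invariant: "L < card (A - {x}) \<or> \<not> E \<subseteq> (A - {x}) \<union> {x, z}"
    using Suc.prems(2,7) x(1) by (auto simp: card_Diff_singleton)
  have "L \<le> card (A - {x})" "x \<noteq> z" "L = 0 \<longrightarrow> E \<noteq> {x, z}"
    using Suc.prems(2,4,6) x by (auto simp: card_Diff_singleton bad_def)
  then obtain T where T: "length T = L" "distinct T" "set T \<subseteq> A - {x}"
    "E \<notin> walk_edges (x # T @ [z])"
    using Suc.IH[where a = x and A = "A - {x}"] invariant Suc.prems(2,4) by blast
  show ?case
    by (rule Suc.prems(1)[of "x # T"]) (use T x in \<open>auto simp: bad_def\<close>)
qed

lemma Kedges_iff: "E \<in> Kedges n \<longleftrightarrow> E \<subseteq> {0..n} \<and> card E = 2"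
proof
  assume "E \<subseteq> {0..n} \<and> card E = 2"
  then obtain x y where "E = {x, y}" "x \<noteq> y" "x \<le> n" "y \<le> n"
    by (auto simp: card_2_iff)
  moreover have "{x, y} = {min x y, max x y}" "min x y < max x y" "max x y \<le> n"
    using \<open>x \<noteq> y\<close> \<open>x \<le> n\<close> \<open>y \<le> n\<close> by (auto simp: min_def max_def)
  ultimately show "E \<in> Kedges n"
    unfolding Kedges_def by blast
qed (auto simp: Kedges_def)

lemma Kedges_cases:
  assumes "E \<in> Kedges n" "E \<noteq> {0, n}"
  obtains (start) t where "t \<in> {1..<n}" "E = {0, t}"
    | (finish) s where "s \<in> {1..<n}" "E = {s, n}"
    | (inner) s t where "s \<in> {1..<n}" "t \<in> {1..<n}" "s \<noteq> t" "E = {s, t}"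
proof -
  obtain i j where ij: "E = {i, j}" "i < j" "j \<le> n"
    using assms(1) unfolding Kedges_def by blast
  then consider "i = 0" "j < n" | "0 < i" "j = n" | "0 < i" "j < n"
    using assms(2) by fastforce
  then show ?thesis
  proof cases
    case 1
    with ij show ?thesis by (intro start[of j]) auto
  next
    case 2
    with ij show ?thesis by (intro finish[of i]) auto
  next
    case 3
    with ij show ?thesis by (intro inner[of i j]) auto
  qed
qed

lemma obtain_walk_through_edge:
  assumes "2 \<le> k" "k < n" "E \<in> Kedges n" "E \<noteq> {0, n}"
  obtains xs where "distinct xs" "set xs \<subseteq> {1..<n}" "length xs = k"
    "E \<in> walk_edges (0 # xs @ [n])"
  using assms(3,4)
proof (cases rule: Kedges_cases)
  case (start t)
  obtain T where "length T = k - 1" "distinct T" "set T \<subseteq> {1..<n} - {t}"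
    by (rule obtain_distinct_list[of "{1..<n} - {t}" "k - 1"]) (use start assms(1,2) in auto)
  then show ?thesis
    using start assms(1) by (intro that[of "t # T"]) auto
next
  case (finish s)
  obtain T where "length T = k - 1" "distinct T" "set T \<subseteq> {1..<n} - {s}"
    by (rule obtain_distinct_list[of "{1..<n} - {s}" "k - 1"]) (use finish assms(1,2) in auto)
  then show ?thesis
    using finish assms(1) walk_edges_snoc[of "0 # T @ [s]" n] by (intro that[of "T @ [s]"]) auto
next
  case (inner s t)
  obtain T where "length T = k - 2" "distinct T" "set T \<subseteq> {1..<n} - {s, t}"
    by (rule obtain_distinct_list[of "{1..<n} - {s, t}" "k - 2"]) (use inner assms(1,2) in auto)
  then show ?thesis
    using inner assms(1) by (intro that[of "s # t # T"]) auto
qed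

section \<open>Edge costs that are constant on the paths avoiding an edge\<close>

lemma eq_on_doubletons_if_moves:
  assumes move: "\<And>x y b. x \<in> S \<Longrightarrow> y \<in> S \<Longrightarrow> b \<in> S \<Longrightarrow> x \<noteq> b \<Longrightarrow> y \<noteq> b \<Longrightarrow>
      E \<noteq> {x, b} \<Longrightarrow> E \<noteq> {y, b} \<Longrightarrow> f {x, b} = f {y, b}"
    and S: "x \<in> S" "y \<in> S" "x' \<in> S" "y' \<in> S" and ne: "x \<noteq> y" "x' \<noteq> y'"
    and E: "E \<noteq> {x, y}" "E \<noteq> {x', y'}"
  shows "f {x, y} = f {x', y'}"
proof (cases "{x, y} \<inter> {x', y'} = {}")
  case True
  then have "x \<noteq> x'" "x \<noteq> y'" "y \<noteq> x'" "y \<noteq> y'" by auto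
  show ?thesis
  proof (cases "E = {x', y}")
    case False
    have "f {x, y} = f {x', y}" by (rule move) (use S E False \<open>x \<noteq> y\<close> \<open>y \<noteq> x'\<close> in auto)
    also have "{x', y} = {y, x'}" by blast
    also have "f \<dots> = f {y', x'}"
      by (rule move) (use S E False \<open>x' \<noteq> y'\<close> \<open>y \<noteq> x'\<close> in \<open>auto simp: insert_commute\<close>)
    finally show ?thesis by (simp add: insert_commute)
  next
    case True
    then have "E \<noteq> {y', y}" using \<open>x' \<noteq> y'\<close> by (auto simp: doubleton_eq_iff)
    have "f {x, y} = f {y', y}" by (rule move) (use S E \<open>E \<noteq> {y', y}\<close> \<open>x \<noteq> y\<close> \<open>y \<noteq> y'\<close> in auto)
    also have "{y', y} = {y, y'}" by blast
    also have "f \<dots> = f {x', y'}"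
      by (rule move) (use S E \<open>E \<noteq> {y', y}\<close> \<open>x' \<noteq> y'\<close> \<open>y \<noteq> y'\<close> in \<open>auto simp: insert_commute\<close>)
    finally show ?thesis .
  qed
next
  case False
  then consider "y = y'" | "y = x'" | "x = y'" | "x = x'" by blast
  then show ?thesis
  proof cases
    case 1
    then show ?thesis using move[of x x' y] S E ne by fastforce
  next
    case 2
    then show ?thesis using move[of x y' y] S E ne by (fastforce simp: insert_commute)
  next
    case 3
    then show ?thesis using move[of y x' x] S E ne by (fastforce simp: insert_commute)
  next
    case 4
    then show ?thesis using move[of y y' x] S E ne by (fastforce simp: insert_commute)
  qed
qed

text \<open>A path from \<open>0\<close> to \<open>n\<close> is written \<open>0 # xs @ [n]\<close> with its list \<open>xs\<close> of inner vertices;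
  in the application \<open>k = p - 1\<close> and \<open>C\<close> is a linear functional read as a cost on edges.\<close>
locale constant_cost_off_edge =
  fixes n k :: nat and E0 :: "nat set" and C :: "nat set \<Rightarrow> real" and c :: real
  assumes three_le_k: "3 \<le> k" and k_le: "k + 2 \<le> n"
    and E0_edge: "E0 \<in> Kedges n" and E0_not_0n: "E0 \<noteq> {0, n}"
    and cost_avoiding: "\<And>xs. distinct xs \<Longrightarrow> set xs \<subseteq> {1..<n} \<Longrightarrow> length xs = k \<Longrightarrow>
      E0 \<notin> walk_edges (0 # xs @ [n]) \<Longrightarrow> walk_cost C (0 # xs @ [n]) = c"
begin

lemma obtain_inner_vertex:
  obtains b where "b \<in> {1..<n}" "b \<noteq> x" "b \<noteq> y" "b \<noteq> z"
proof -
  have "card {x, y, z} \<le> 3"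
    by (auto simp: card_insert_if)
  then have "card {x, y, z} < card {1..<n}"
    using three_le_k k_le by simp
  then have "\<not> {1..<n} \<subseteq> {x, y, z}"
    by (meson card_mono finite.emptyI finite.insertI leD)
  then show ?thesis using that by blast
qed

lemma obtain_inner_vertex_of_E0:
  obtains s where "s \<in> E0" "s \<in> {1..<n}"
proof -
  have "E0 \<subseteq> {0..n}" "card E0 = 2" using E0_edge by (auto simp: Kedges_iff)
  moreover have "\<not> E0 \<subseteq> {0, n}"
  proof
    assume "E0 \<subseteq> {0, n}"
    moreover have "card {0, n} \<le> card E0"
      using \<open>card E0 = 2\<close> by (simp add: card_insert_if)
    ultimately have "E0 = {0, n}"
      by (intro card_seteq) auto
    with E0_not_0n show False ..
  qed
  ultimately show ?thesis using that by fastforce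
qed

text \<open>Exchanging two vertices right after the start: the paths \<open>0 u w b T n\<close>, \<open>0 w u b T n\<close>,
  \<open>0 u b T' n\<close> and \<open>0 w b T' n\<close> all avoid \<open>E0\<close> and hence have cost \<open>c\<close>. The hypothesis
  \<open>meets\<close> is needed only when \<open>k + 2 = n\<close>, where \<open>T'\<close> has to use all remaining inner vertices.\<close>
lemma start_swap:
  assumes uwb: "u \<in> {1..<n}" "w \<in> {1..<n}" "b \<in> {1..<n}" "distinct [u, w, b]"
    and avoid: "E0 \<notin> {{0, u}, {0, w}, {u, w}, {u, b}, {w, b}, {b, n}}"
    and meets: "E0 \<inter> {0, u, w} \<noteq> {}"
  shows "C {0, u} = C {0, w} \<and> C {u, b} = C {w, b}"
proof -
  define A where "A = {1..<n} - {u, w, b}"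
  have A: "finite A" "A \<subseteq> {1..<n}" "u \<notin> A" "w \<notin> A" "b \<notin> A" "0 \<notin> A" "n \<notin> A"
    unfolding A_def by auto
  have card_A: "card A = n - 4"
    using uwb unfolding A_def by (simp add: card_Diff_subset)
  have "b \<noteq> n" "0 \<noteq> n"
    using uwb(3) by auto
  obtain T1 where T1: "length T1 = k - 3" "distinct T1" "set T1 \<subseteq> A"
      "E0 \<notin> walk_edges (b # T1 @ [n])"
  proof (rule obtain_avoiding_walk[of A b n "k - 3" E0])
    have "k - 3 < card A"
      using card_A three_le_k k_le by linarith
    then show "k - 3 \<le> card A" "k - 3 < card A \<or> \<not> E0 \<subseteq> A \<union> {b, n}"
      by simp_all
    show "k - 3 = 0 \<longrightarrow> E0 \<noteq> {b, n}"
      using avoid by simp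
  qed (use A \<open>b \<noteq> n\<close> in auto)
  have "\<not> E0 \<subseteq> A \<union> {b, n}"
    using meets A uwb \<open>0 \<noteq> n\<close> by auto
  obtain T2 where T2: "length T2 = k - 2" "distinct T2" "set T2 \<subseteq> A"
      "E0 \<notin> walk_edges (b # T2 @ [n])"
  proof (rule obtain_avoiding_walk[of A b n "k - 2" E0])
    show "k - 2 \<le> card A" "k - 2 = 0 \<longrightarrow> E0 \<noteq> {b, n}"
      using card_A three_le_k k_le by simp_all
  qed (use A \<open>b \<noteq> n\<close> \<open>\<not> E0 \<subseteq> A \<union> {b, n}\<close> in auto)
  have T_inner: "u \<notin> set T" "w \<notin> set T" "b \<notin> set T" "set T \<subseteq> {1..<n}" if "set T \<subseteq> A" for T
    using that A by auto
  have E0_ne: "E0 \<noteq> {0, u}" "E0 \<noteq> {0, w}" "E0 \<noteq> {u, w}" "E0 \<noteq> {w, u}" "E0 \<noteq> {u, b}" "E0 \<noteq> {w, b}"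
    using avoid by (auto simp: insert_commute)
  have "walk_cost C (0 # (u # w # b # T1) @ [n]) = c" "walk_cost C (0 # (w # u # b # T1) @ [n]) = c"
    by (rule cost_avoiding; use T1 T_inner[OF T1(3)] uwb E0_ne three_le_k in simp)+
  moreover have "walk_cost C (0 # (u # b # T2) @ [n]) = c" "walk_cost C (0 # (w # b # T2) @ [n]) = c"
    by (rule cost_avoiding; use T2 T_inner[OF T2(3)] uwb E0_ne three_le_k in simp)+
  ultimately have "C {0, u} + C {u, w} + C {w, b} + walk_cost C (b # T1 @ [n]) = c"
    "C {0, w} + C {u, w} + C {u, b} + walk_cost C (b # T1 @ [n]) = c"
    "C {0, u} + C {u, b} + walk_cost C (b # T2 @ [n]) = c"
    "C {0, w} + C {w, b} + walk_cost C (b # T2 @ [n]) = c"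
    by (simp_all add: insert_commute add.assoc)
  then show ?thesis by linarith
qed

abbreviation swap_ends :: "nat \<Rightarrow> nat" where
  "swap_ends \<equiv> Transposition.transpose 0 n"

lemma swap_ends_inner [simp]: "v \<in> {1..<n} \<Longrightarrow> swap_ends v = v"
  by (simp add: Transposition.transpose_def)

lemma swap_ends_image_image [simp]: "swap_ends ` swap_ends ` X = X"
  by (simp add: image_image)

lemma image_swap_ends_eq_iff: "swap_ends ` X = Y \<longleftrightarrow> X = swap_ends ` Y"
  by auto

text \<open>Reversing paths and exchanging the end vertices \<open>0\<close> and \<open>n\<close> is a symmetry of the setting.\<close>
lemma mirror: "constant_cost_off_edge n k (swap_ends ` E0) (\<lambda>e. C (swap_ends ` e)) c"
proof
  show "3 \<le> k" "k + 2 \<le> n" by (fact three_le_k k_le)+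
  have "swap_ends ` E0 \<subseteq> {0..n}"
    using E0_edge by (auto simp: Kedges_iff Transposition.transpose_def)
  moreover have "card (swap_ends ` E0) = card E0"
    by (simp add: card_image)
  ultimately show "swap_ends ` E0 \<in> Kedges n"
    using E0_edge by (simp add: Kedges_iff)
  show "swap_ends ` E0 \<noteq> {0, n}"
    using E0_not_0n by (auto simp: image_swap_ends_eq_iff insert_commute)
  fix xs assume xs: "distinct xs" "set xs \<subseteq> {1..<n}" "length xs = k"
    "swap_ends ` E0 \<notin> walk_edges (0 # xs @ [n])"
  have "map swap_ends (0 # xs @ [n]) = rev (0 # rev xs @ [n])"
    using xs(2) by (auto intro!: map_idI)
  then have "walk_edges (0 # rev xs @ [n]) = image swap_ends ` walk_edges (0 # xs @ [n])"
    "walk_cost (\<lambda>e. C (swap_ends ` e)) (0 # xs @ [n]) = walk_cost C (0 # rev xs @ [n])"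
    by (metis walk_edges_map walk_edges_rev, metis walk_cost_map walk_cost_rev)
  moreover have "E0 \<notin> image swap_ends ` walk_edges (0 # xs @ [n])"
  proof
    assume "E0 \<in> image swap_ends ` walk_edges (0 # xs @ [n])"
    then obtain e where "e \<in> walk_edges (0 # xs @ [n])" "E0 = swap_ends ` e"
      by blast
    with xs(4) show False
      by (simp add: image_swap_ends_eq_iff[symmetric])
  qed
  ultimately show "walk_cost (\<lambda>e. C (swap_ends ` e)) (0 # xs @ [n]) = c"
    using xs(1-3) by (simp add: cost_avoiding)
qed

lemma end_swap:
  assumes uwb: "u \<in> {1..<n}" "w \<in> {1..<n}" "b \<in> {1..<n}" "distinct [u, w, b]"
    and avoid: "E0 \<notin> {{u, n}, {w, n}, {u, w}, {u, b}, {w, b}, {0, b}}"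
    and meets: "E0 \<inter> {n, u, w} \<noteq> {}"
  shows "C {u, n} = C {w, n} \<and> C {u, b} = C {w, b}"
proof -
  interpret mirrored: constant_cost_off_edge n k "swap_ends ` E0" "\<lambda>e. C (swap_ends ` e)" c
    by (rule mirror)
  have "swap_ends ` E0 \<notin> {{0, u}, {0, w}, {u, w}, {u, b}, {w, b}, {b, n}}"
    using avoid uwb by (auto simp: image_swap_ends_eq_iff insert_commute)
  moreover have "swap_ends ` E0 \<inter> {0, u, w} \<noteq> {}"
    using meets uwb by (force simp: Transposition.transpose_def)
  ultimately show ?thesis
    using mirrored.start_swap[OF uwb] uwb by (simp add: insert_commute)
qed

lemma start_edges_eq_if_meets:
  assumes uv: "u \<in> {1..<n}" "v \<in> {1..<n}" "u \<noteq> v"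
    and avoid: "E0 \<notin> {{0, u}, {0, v}, {u, v}}" and meets: "E0 \<inter> {0, u, v} \<noteq> {}"
  shows "C {0, u} = C {0, v}"
proof -
  obtain i where i: "i \<in> E0" "i \<in> {0, u, v}"
    using meets by blast
  obtain j where E0_ij: "E0 = {i, j}"
    using E0_edge i(1) by (auto simp: Kedges_iff card_2_iff doubleton_eq_iff)
  obtain b where b: "b \<in> {1..<n}" "b \<noteq> u" "b \<noteq> v" "b \<noteq> j"
    by (rule obtain_inner_vertex)
  have "b \<notin> E0"
    using E0_ij i(2) b by auto
  then have "E0 \<noteq> {u, b}" "E0 \<noteq> {v, b}" "E0 \<noteq> {b, n}"
    by auto
  then show ?thesis
    using start_swap[of u v b] uv avoid meets b by simp
qed

lemma start_edges_eq:
  assumes u: "u \<in> {1..<n}" "E0 \<noteq> {0, u}" and v: "v \<in> {1..<n}" "E0 \<noteq> {0, v}"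
  shows "C {0, u} = C {0, v}"
proof -
  consider "u = v" | "u \<noteq> v" "E0 \<inter> {0, u, v} \<noteq> {}" "E0 \<noteq> {u, v}" | "E0 = {u, v}"
    | "E0 \<inter> {0, u, v} = {}"
    by blast
  then show ?thesis
  proof cases
    case 2
    then show ?thesis using start_edges_eq_if_meets u v by blast
  next
    case 3
    obtain w where w: "w \<in> {1..<n}" "w \<noteq> u" "w \<noteq> v"
      by (rule obtain_inner_vertex)
    have "C {0, u} = C {0, w}" "C {0, w} = C {0, v}"
      using start_edges_eq_if_meets[of u w] start_edges_eq_if_meets[of w v] 3 u v w
      by (auto simp: doubleton_eq_iff)
    then show ?thesis by simp
  next
    case 4
    obtain s where s: "s \<in> E0" "s \<in> {1..<n}"
      by (rule obtain_inner_vertex_of_E0)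
    have "C {0, u} = C {0, s}" "C {0, s} = C {0, v}"
      using start_edges_eq_if_meets[of u s] start_edges_eq_if_meets[of s v] 4 u v s by auto
    then show ?thesis by simp
  qed simp
qed

lemma end_edges_eq:
  assumes "u \<in> {1..<n}" "E0 \<noteq> {u, n}" "v \<in> {1..<n}" "E0 \<noteq> {v, n}"
  shows "C {u, n} = C {v, n}"
proof -
  interpret mirrored: constant_cost_off_edge n k "swap_ends ` E0" "\<lambda>e. C (swap_ends ` e)" c
    by (rule mirror)
  have "swap_ends ` E0 \<noteq> {0, u}" "swap_ends ` E0 \<noteq> {0, v}"
    using assms by (auto simp: image_swap_ends_eq_iff insert_commute)
  then show ?thesis
    using mirrored.start_edges_eq[of u v] assms by (simp add: insert_commute)
qed

lemma inner_move_if_meets: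
  assumes xyb: "x \<in> {1..<n}" "y \<in> {1..<n}" "b \<in> {1..<n}" "distinct [x, y, b]"
    and avoid: "E0 \<notin> {{x, b}, {y, b}, {x, y}}" and meets: "E0 \<inter> {x, y} \<noteq> {}"
  shows "C {x, b} = C {y, b}"
proof (cases "0 \<in> E0")
  case True
  then have "E0 \<notin> {{x, n}, {y, n}, {x, y}, {x, b}, {y, b}, {0, b}}"
    using xyb avoid meets by (auto simp: doubleton_eq_iff)
  then show ?thesis using end_swap[OF xyb] meets by auto
next
  case False
  then have "E0 \<notin> {{0, x}, {0, y}, {x, y}, {x, b}, {y, b}, {b, n}}"
    using xyb avoid meets by (auto simp: doubleton_eq_iff)
  then show ?thesis using start_swap[OF xyb] meets by auto
qed

lemma inner_move:
  assumes xyb: "x \<in> {1..<n}" "y \<in> {1..<n}" "b \<in> {1..<n}" "x \<noteq> b" "y \<noteq> b"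
    and avoid: "E0 \<noteq> {x, b}" "E0 \<noteq> {y, b}"
  shows "C {x, b} = C {y, b}"
proof -
  consider "x = y" | "x \<noteq> y" "E0 \<inter> {x, y} \<noteq> {}" "E0 \<noteq> {x, y}" | "x \<noteq> y" "E0 = {x, y}"
    | "x \<noteq> y" "E0 \<inter> {x, y} = {}" "b \<in> E0" | "x \<noteq> y" "E0 \<inter> {x, y} = {}" "b \<notin> E0"
    by blast
  then show ?thesis
  proof cases
    case 2
    then show ?thesis using inner_move_if_meets xyb avoid by simp
  next
    case 3
    obtain w where w: "w \<in> {1..<n}" "w \<noteq> x" "w \<noteq> y" "w \<noteq> b"
      by (rule obtain_inner_vertex)
    have "C {x, b} = C {w, b}"
      by (rule inner_move_if_meets) (use 3 xyb w in \<open>simp_all add: doubleton_eq_iff\<close>)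
    also have "\<dots> = C {y, b}"
      by (rule inner_move_if_meets) (use 3 xyb w in \<open>simp_all add: doubleton_eq_iff\<close>)
    finally show ?thesis .
  next
    case 4
    have "C {b, x} = C {y, x}" "C {b, y} = C {x, y}"
      using inner_move_if_meets[of b y x] inner_move_if_meets[of b x y] 4 xyb avoid
      by (auto simp: insert_commute)
    then show ?thesis by (simp add: insert_commute)
  next
    case 5
    obtain s where s: "s \<in> E0" "s \<in> {1..<n}"
      by (rule obtain_inner_vertex_of_E0)
    have "C {x, b} = C {s, b}" "C {s, b} = C {y, b}"
      using inner_move_if_meets[of x s b] inner_move_if_meets[of s y b] 5 xyb s
      by (auto simp: doubleton_eq_iff)
    then show ?thesis by simp
  qed simp
qed

lemma inner_edges_eq:
  assumes "x \<in> {1..<n}" "y \<in> {1..<n}" "x' \<in> {1..<n}" "y' \<in> {1..<n}" "x \<noteq> y" "x' \<noteq> y'"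
    and "E0 \<noteq> {x, y}" "E0 \<noteq> {x', y'}"
  shows "C {x, y} = C {x', y'}"
  using inner_move assms by (rule eq_on_doubletons_if_moves)

lemma obtain_edge_class_costs:
  obtains a b l where "\<And>u. u \<in> {1..<n} \<Longrightarrow> E0 \<noteq> {0, u} \<Longrightarrow> C {0, u} = a"
    and "\<And>u. u \<in> {1..<n} \<Longrightarrow> E0 \<noteq> {u, n} \<Longrightarrow> C {u, n} = b"
    and "\<And>x y. x \<in> {1..<n} \<Longrightarrow> y \<in> {1..<n} \<Longrightarrow> x \<noteq> y \<Longrightarrow> E0 \<noteq> {x, y} \<Longrightarrow> C {x, y} = l"
proof -
  obtain i j where "E0 = {i, j}"
    using E0_edge unfolding Kedges_def by blast
  obtain x0 where x0: "x0 \<in> {1..<n}" "x0 \<notin> E0"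
    using obtain_inner_vertex[of i j j] \<open>E0 = {i, j}\<close> by blast
  obtain y0 where y0: "y0 \<in> {1..<n}" "y0 \<notin> E0" "y0 \<noteq> x0"
    using obtain_inner_vertex[of i j x0] \<open>E0 = {i, j}\<close> by blast
  show ?thesis
  proof (rule that[of "C {0, x0}" "C {x0, n}" "C {x0, y0}"])
    show "C {0, u} = C {0, x0}" if "u \<in> {1..<n}" "E0 \<noteq> {0, u}" for u
      using start_edges_eq that x0 by blast
    show "C {u, n} = C {x0, n}" if "u \<in> {1..<n}" "E0 \<noteq> {u, n}" for u
      using end_edges_eq that x0 by blast
    show "C {x, y} = C {x0, y0}" if "x \<in> {1..<n}" "y \<in> {1..<n}" "x \<noteq> y" "E0 \<noteq> {x, y}" for x y
      using inner_edges_eq that x0 y0 by blast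
  qed
qed

theorem walk_cost_through_E0_eq:
  assumes "distinct xs" "set xs \<subseteq> {1..<n}" "length xs = k" "E0 \<in> walk_edges (0 # xs @ [n])"
    and "distinct ys" "set ys \<subseteq> {1..<n}" "length ys = k" "E0 \<in> walk_edges (0 # ys @ [n])"
  shows "walk_cost C (0 # xs @ [n]) = walk_cost C (0 # ys @ [n])"
proof -
  obtain a b l where a: "\<And>u. u \<in> {1..<n} \<Longrightarrow> E0 \<noteq> {0, u} \<Longrightarrow> C {0, u} = a"
    and b: "\<And>u. u \<in> {1..<n} \<Longrightarrow> E0 \<noteq> {u, n} \<Longrightarrow> C {u, n} = b"
    and l: "\<And>x y. x \<in> {1..<n} \<Longrightarrow> y \<in> {1..<n} \<Longrightarrow> x \<noteq> y \<Longrightarrow> E0 \<noteq> {x, y} \<Longrightarrow> C {x, y} = l"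
    by (rule obtain_edge_class_costs) auto
  define G where "G e = (if 0 \<in> e then a else if n \<in> e then b else l)" for e
  have "walk_cost C (0 # zs @ [n]) = a + (real k - 1) * l + b + (C E0 - G E0)"
    if zs: "distinct zs" "set zs \<subseteq> {1..<n}" "length zs = k" "E0 \<in> walk_edges (0 # zs @ [n])"
    for zs
  proof -
    have "zs \<noteq> []" "0 \<notin> set zs" "n \<notin> set zs" "n \<noteq> 0"
      using zs three_le_k k_le by auto
    have "C e = G e" if e_in: "e \<in> walk_edges (0 # zs @ [n])" and e_ne: "e \<noteq> E0" for e
      using e_in \<open>zs \<noteq> []\<close> zs(1,2)
    proof (cases rule: walk_edges_0n_cases)
      case (start u)
      then show ?thesis using a[of u] e_ne[symmetric] by (simp add: G_def)
    next
      case (finish u)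
      then show ?thesis using b[of u] e_ne[symmetric] by (simp add: G_def)
    next
      case (inner x y)
      then show ?thesis using l[of x y] e_ne[symmetric] by (simp add: G_def)
    qed
    then have "walk_cost C (0 # zs @ [n]) = walk_cost G (0 # zs @ [n]) + (C E0 - G E0)"
      using zs \<open>0 \<notin> set zs\<close> \<open>n \<notin> set zs\<close> \<open>n \<noteq> 0\<close>
      by (intro walk_cost_eq_if_agree_off_edge) auto
    also have "walk_cost G (0 # zs @ [n]) = a + (real k - 1) * l + b"
      using walk_cost_of_edge_classes[of zs n a b l] \<open>zs \<noteq> []\<close> \<open>0 \<notin> set zs\<close> \<open>n \<notin> set zs\<close>
        \<open>n \<noteq> 0\<close> zs(3) unfolding G_def by simp
    finally show ?thesis .
  qed
  with assms show ?thesis by simp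
qed

end

section \<open>A facet criterion\<close>

lemma inner_constant_on_affine_if_bounded_below:
  fixes a :: "'a::real_inner"
  assumes S: "affine S" and bound: "\<And>x. x \<in> S \<Longrightarrow> b < a \<bullet> x" and xy: "x \<in> S" "y \<in> S"
  shows "a \<bullet> x = a \<bullet> y"
proof (rule ccontr)
  assume ne: "a \<bullet> x \<noteq> a \<bullet> y"
  define t where "t = (b - a \<bullet> x) / (a \<bullet> y - a \<bullet> x)"
  have "(1 - t) *\<^sub>R x + t *\<^sub>R y \<in> S"
    using S xy unfolding affine_alt by blast
  then have "b < a \<bullet> ((1 - t) *\<^sub>R x + t *\<^sub>R y)"
    by (rule bound)
  also have "a \<bullet> ((1 - t) *\<^sub>R x + t *\<^sub>R y) = a \<bullet> x + t * (a \<bullet> y - a \<bullet> x)"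
    by (simp add: inner_add_right algebra_simps)
  also have "\<dots> = b"
    using ne unfolding t_def by simp
  finally show False by simp
qed

lemma mem_affine_hull_if_functionals_agree:
  fixes v :: "'a::euclidean_space"
  assumes "s \<in> S" and agree: "\<And>a. (\<And>x. x \<in> S \<Longrightarrow> a \<bullet> x = a \<bullet> s) \<Longrightarrow> a \<bullet> v = a \<bullet> s"
  shows "v \<in> affine hull S"
proof (rule ccontr)
  assume "v \<notin> affine hull S"
  then obtain a b where ab: "a \<bullet> v < b" "\<And>x. x \<in> affine hull S \<Longrightarrow> b < a \<bullet> x"
    using separating_hyperplane_closed_point[of "affine hull S" v]
    by (auto simp: closed_affine_hull affine_imp_convex)
  have "a \<bullet> x = a \<bullet> s" if "x \<in> S" for x
    using inner_constant_on_affine_if_bounded_below[OF affine_affine_hull ab(2)] that assms(1)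
    by (simp add: hull_inc)
  then have "a \<bullet> v = a \<bullet> s"
    by (rule agree)
  with ab assms(1) show False
    by (metis hull_inc not_less_iff_gr_or_eq)
qed

lemma face_of_convex_hull_if_nonneg:
  fixes h :: "'a::euclidean_space"
  assumes "\<And>v. v \<in> V \<Longrightarrow> 0 \<le> h \<bullet> v"
  shows "{y \<in> convex hull V. h \<bullet> y = 0} face_of convex hull V"
proof -
  have "convex hull V \<subseteq> {y. 0 \<le> h \<bullet> y}"
    by (rule hull_minimal) (use assms convex_halfspace_ge in auto)
  then have "(convex hull V \<inter> {y. (- h) \<bullet> y = 0}) face_of convex hull V"
    by (intro face_of_Int_supporting_hyperplane_le) auto
  moreover have "convex hull V \<inter> {y. (- h) \<bullet> y = 0} = {y \<in> convex hull V. h \<bullet> y = 0}"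
    by auto
  ultimately show ?thesis by simp
qed

lemma facet_of_convex_hull_if_rigid:
  fixes h :: "'a::euclidean_space" and \<phi> :: "'b \<Rightarrow> 'a"
  assumes nonneg: "\<And>x. x \<in> X \<Longrightarrow> 0 \<le> h \<bullet> \<phi> x"
    and x0: "x0 \<in> X" "h \<bullet> \<phi> x0 = 0" and x1: "x1 \<in> X" "h \<bullet> \<phi> x1 \<noteq> 0"
    and rigid: "\<And>a x y. (\<And>x y. x \<in> X \<Longrightarrow> h \<bullet> \<phi> x = 0 \<Longrightarrow> y \<in> X \<Longrightarrow> h \<bullet> \<phi> y = 0 \<Longrightarrow>
        a \<bullet> \<phi> x = a \<bullet> \<phi> y) \<Longrightarrow>
      x \<in> X \<Longrightarrow> h \<bullet> \<phi> x \<noteq> 0 \<Longrightarrow> y \<in> X \<Longrightarrow> h \<bullet> \<phi> y \<noteq> 0 \<Longrightarrow> a \<bullet> \<phi> x = a \<bullet> \<phi> y"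
  shows "{y \<in> convex hull (\<phi> ` X). h \<bullet> y = 0} facet_of convex hull (\<phi> ` X)"
proof -
  define P where "P = convex hull (\<phi> ` X)"
  define F where "F = {y \<in> P. h \<bullet> y = 0}"
  have face: "F face_of P"
    unfolding F_def P_def by (rule face_of_convex_hull_if_nonneg) (use nonneg in auto)
  have "\<phi> x0 \<in> F" "\<phi> x1 \<in> P - F"
    using x0 x1 unfolding F_def P_def by (auto intro: hull_inc)
  then have "aff_dim F < aff_dim P"
    using face_of_aff_dim_lt[OF _ face] unfolding P_def by auto
  have "\<phi> ` X \<subseteq> affine hull (insert (\<phi> x1) F)"
  proof clarify
    fix x assume "x \<in> X"
    show "\<phi> x \<in> affine hull (insert (\<phi> x1) F)"
    proof (cases "h \<bullet> \<phi> x = 0")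
      case True
      then show ?thesis using \<open>x \<in> X\<close> unfolding F_def P_def by (simp add: hull_inc)
    next
      case False
      show ?thesis
      proof (rule mem_affine_hull_if_functionals_agree[of "\<phi> x1"])
        fix a assume "\<And>y. y \<in> insert (\<phi> x1) F \<Longrightarrow> a \<bullet> y = a \<bullet> \<phi> x1"
        then have "a \<bullet> \<phi> y = a \<bullet> \<phi> z" if "y \<in> X" "h \<bullet> \<phi> y = 0" "z \<in> X" "h \<bullet> \<phi> z = 0" for y z
          using that unfolding F_def P_def by (metis (mono_tags, lifting) hull_inc image_eqI insertCI mem_Collect_eq)
        then show "a \<bullet> \<phi> x = a \<bullet> \<phi> x1"
          using rigid \<open>x \<in> X\<close> False x1 by blast
      qed simp
    qed
  qed
  then have "P \<subseteq> affine hull (insert (\<phi> x1) F)"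
    unfolding P_def by (intro hull_minimal) (auto simp: affine_imp_convex)
  then have "aff_dim P \<le> aff_dim (affine hull (insert (\<phi> x1) F))"
    by (rule aff_dim_subset)
  also have "\<dots> \<le> aff_dim F + 1"
    by (simp add: aff_dim_insert)
  finally have "aff_dim P \<le> aff_dim F + 1" .
  with face \<open>\<phi> x0 \<in> F\<close> \<open>aff_dim F < aff_dim P\<close> show ?thesis
    unfolding facet_of_def F_def P_def by auto
qed

lemma facet_of_convex_hull_coordinate_if_rigid:
  fixes \<phi> :: "'b \<Rightarrow> real ^ 'n"
  assumes "\<And>x. x \<in> X \<Longrightarrow> 0 \<le> \<phi> x $ i"
    and "x0 \<in> X" "\<phi> x0 $ i = 0" and "x1 \<in> X" "\<phi> x1 $ i \<noteq> 0"
    and "\<And>a x y. (\<And>x y. x \<in> X \<Longrightarrow> \<phi> x $ i = 0 \<Longrightarrow> y \<in> X \<Longrightarrow> \<phi> y $ i = 0 \<Longrightarrow>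
        a \<bullet> \<phi> x = a \<bullet> \<phi> y) \<Longrightarrow>
      x \<in> X \<Longrightarrow> \<phi> x $ i \<noteq> 0 \<Longrightarrow> y \<in> X \<Longrightarrow> \<phi> y $ i \<noteq> 0 \<Longrightarrow> a \<bullet> \<phi> x = a \<bullet> \<phi> y"
  shows "{y \<in> convex hull (\<phi> ` X). y $ i = 0} facet_of convex hull (\<phi> ` X)"
proof -
  have "axis i 1 \<bullet> y = y $ i" for y :: "real ^ 'n"
    by (simp add: inner_axis')
  from facet_of_convex_hull_if_rigid[of X "axis i 1" \<phi> x0 x1, unfolded this] assms
  show ?thesis by blast
qed

section \<open>The path polytope\<close>

definition incidence_vector :: "('e::finite \<Rightarrow> 'a) \<Rightarrow> 'a set \<Rightarrow> real ^ 'e" where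
  "incidence_vector ed F = (\<chi> i. of_bool (ed i \<in> F))"

lemma inner_incidence_vector:
  assumes "bij_betw ed UNIV K" "F \<subseteq> K"
  shows "c \<bullet> incidence_vector ed F = (\<Sum>f\<in>F. c $ inv_into UNIV ed f)"
proof -
  have "finite K"
    using bij_betw_finite[OF assms(1)] by simp
  have "c \<bullet> incidence_vector ed F = (\<Sum>i\<in>UNIV. c $ inv_into UNIV ed (ed i) * of_bool (ed i \<in> F))"
    using bij_betw_inv_into_left[OF assms(1)]
    unfolding inner_vec_def incidence_vector_def by simp
  also have "\<dots> = (\<Sum>f\<in>K. c $ inv_into UNIV ed f * of_bool (f \<in> F))"
    by (rule sum.reindex_bij_betw[OF assms(1)])
  also have "\<dots> = (\<Sum>f\<in>K. if f \<in> F then c $ inv_into UNIV ed f else 0)"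
    by (rule sum.cong) auto
  also have "\<dots> = (\<Sum>f\<in>F. c $ inv_into UNIV ed f)"
    using \<open>finite K\<close> assms(2) by (simp add: sum.inter_restrict[symmetric] Int_absorb1)
  finally show ?thesis .
qed

lemma is_path_0n_iff:
  assumes "1 \<le> p" "0 < n"
  shows "is_path_0n n p vs \<longleftrightarrow>
    (\<exists>xs. vs = 0 # xs @ [n] \<and> distinct xs \<and> set xs \<subseteq> {1..<n} \<and> length xs = p - 1)"
proof
  assume path: "is_path_0n n p vs"
  then obtain ys where ys: "vs = 0 # ys"
    unfolding is_path_0n_def by (cases vs) auto
  moreover have "ys \<noteq> []"
    using path assms(1) ys unfolding is_path_0n_def by auto
  moreover have "last ys = n"
    using path ys \<open>ys \<noteq> []\<close> unfolding is_path_0n_def by simp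
  ultimately have vs: "vs = 0 # butlast ys @ [n]"
    using append_butlast_last_id[OF \<open>ys \<noteq> []\<close>] by simp
  then have "distinct (0 # butlast ys @ [n])" "set (butlast ys) \<subseteq> {0..n}"
    "length (butlast ys) = p - 1"
    using path unfolding is_path_0n_def by auto
  moreover have "{0..n} - {0, n} = {1..<n}"
    by auto
  ultimately have "distinct (butlast ys)" "set (butlast ys) \<subseteq> {1..<n}" "length (butlast ys) = p - 1"
    by auto
  with vs show "\<exists>xs. vs = 0 # xs @ [n] \<and> distinct xs \<and> set xs \<subseteq> {1..<n} \<and> length xs = p - 1"
    by blast
qed (use assms in \<open>fastforce simp: is_path_0n_def\<close>)

lemma walk_edges_subset_Kedges:
  assumes "distinct vs" "set vs \<subseteq> {0..n}"
  shows "walk_edges vs \<subseteq> Kedges n"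
proof
  fix f assume "f \<in> walk_edges vs"
  then obtain x y where f: "f = {x, y}" "x \<in> set vs" "y \<in> set vs" "x \<noteq> y"
    using assms(1) by (rule mem_walk_edgesE)
  then have "x \<le> n" "y \<le> n"
    using assms(2) by auto
  with f show "f \<in> Kedges n"
    by (simp add: Kedges_iff)
qed

definition inner_seqs :: "nat \<Rightarrow> nat \<Rightarrow> nat list set" where
  "inner_seqs n k = {xs. distinct xs \<and> set xs \<subseteq> {1..<n} \<and> length xs = k}"

definition path_vertex :: "('e::finite \<Rightarrow> nat set) \<Rightarrow> nat \<Rightarrow> nat list \<Rightarrow> real ^ 'e" where
  "path_vertex ed n xs = incidence_vector ed (walk_edges (0 # xs @ [n]))"

lemma path_polytope_eq:
  assumes "1 \<le> p" "0 < n"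
  shows "path_polytope n p ed = convex hull (path_vertex ed n ` inner_seqs n (p - 1))"
  unfolding path_polytope_def is_path_0n_iff[OF assms] path_edges_eq_walk_edges path_vertex_def
    incidence_vector_def inner_seqs_def of_bool_def
  by (rule arg_cong[where f = "\<lambda>S. convex hull S"]) auto

lemma path_vertex_component:
  "path_vertex ed n xs $ e = of_bool (ed e \<in> walk_edges (0 # xs @ [n]))"
  by (simp add: path_vertex_def incidence_vector_def)

lemma inner_path_vertex:
  assumes "bij_betw ed UNIV (Kedges n)" "0 < n" "xs \<in> inner_seqs n k"
  shows "a \<bullet> path_vertex ed n xs = walk_cost (\<lambda>f. a $ inv_into UNIV ed f) (0 # xs @ [n])"
proof -
  have "distinct (0 # xs @ [n])" "set (0 # xs @ [n]) \<subseteq> {0..n}"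
    using assms(2,3) by (auto simp: inner_seqs_def)
  then show ?thesis
    unfolding path_vertex_def
    by (simp add: inner_incidence_vector[OF assms(1)] walk_edges_subset_Kedges walk_cost_eq_sum)
qed

lemma path_vertex_cost_rigid:
  assumes "4 \<le> p" "p < n" "bij_betw ed UNIV (Kedges n)" "ed e \<noteq> {0, n}"
    and const: "\<And>xs ys. xs \<in> inner_seqs n (p - 1) \<Longrightarrow> path_vertex ed n xs $ e = 0 \<Longrightarrow>
      ys \<in> inner_seqs n (p - 1) \<Longrightarrow> path_vertex ed n ys $ e = 0 \<Longrightarrow>
      a \<bullet> path_vertex ed n xs = a \<bullet> path_vertex ed n ys"
    and xs: "xs \<in> inner_seqs n (p - 1)" "path_vertex ed n xs $ e \<noteq> 0"
    and ys: "ys \<in> inner_seqs n (p - 1)" "path_vertex ed n ys $ e \<noteq> 0"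
  shows "a \<bullet> path_vertex ed n xs = a \<bullet> path_vertex ed n ys"
proof -
  let ?C = "\<lambda>f. a $ inv_into UNIV ed f"
  have n_pos: "0 < n"
    using assms(2) by simp
  have ed_e: "ed e \<in> Kedges n"
    by (rule bij_betw_apply[OF assms(3)]) simp
  obtain x0 where x0: "length x0 = p - 1" "distinct x0" "set x0 \<subseteq> {1..<n}"
    "ed e \<notin> walk_edges (0 # x0 @ [n])"
    by (rule obtain_avoiding_walk[of "{1..<n}" 0 n "p - 1" "ed e"]) (use assms(1,2) in auto)
  interpret constant_cost_off_edge n "p - 1" "ed e" ?C "a \<bullet> path_vertex ed n x0"
  proof
    show "3 \<le> p - 1" "p - 1 + 2 \<le> n"
      using assms(1,2) by auto
    show "ed e \<in> Kedges n" "ed e \<noteq> {0, n}"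
      by (fact ed_e assms(4))+
    fix zs assume zs: "distinct zs" "set zs \<subseteq> {1..<n}" "length zs = p - 1"
      "ed e \<notin> walk_edges (0 # zs @ [n])"
    then have "a \<bullet> path_vertex ed n zs = a \<bullet> path_vertex ed n x0"
      by (intro const) (use x0 in \<open>simp_all add: inner_seqs_def path_vertex_component\<close>)
    with zs show "walk_cost ?C (0 # zs @ [n]) = a \<bullet> path_vertex ed n x0"
      by (simp add: inner_path_vertex[OF assms(3) n_pos] inner_seqs_def)
  qed
  show ?thesis
    using xs ys walk_cost_through_E0_eq[of xs ys]
    by (simp add: inner_path_vertex[OF assms(3) n_pos] inner_seqs_def path_vertex_component)
qed

theorem mainTheorem19:
  fixes n p :: nat and ed :: "'e::finite \<Rightarrow> nat set" and e :: 'e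
  assumes "4 \<le> p" and "p < n"
    and "bij_betw ed UNIV (Kedges n)"
    and "ed e \<noteq> {0, n}"
  shows "{y \<in> path_polytope n p ed. y $ e = 0} facet_of path_polytope n p ed"
proof -
  let ?X = "inner_seqs n (p - 1)"
  obtain x0 where "length x0 = p - 1" "distinct x0" "set x0 \<subseteq> {1..<n}"
    "ed e \<notin> walk_edges (0 # x0 @ [n])"
    by (rule obtain_avoiding_walk[of "{1..<n}" 0 n "p - 1" "ed e"]) (use assms(1,2) in auto)
  then have x0: "x0 \<in> ?X" "path_vertex ed n x0 $ e = 0"
    by (simp_all add: inner_seqs_def path_vertex_component)
  obtain x1 where "distinct x1" "set x1 \<subseteq> {1..<n}" "length x1 = p - 1"
    "ed e \<in> walk_edges (0 # x1 @ [n])"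
    by (rule obtain_walk_through_edge[of "p - 1" n "ed e"])
      (use assms bij_betw_apply[OF assms(3)] in auto)
  then have x1: "x1 \<in> ?X" "path_vertex ed n x1 $ e \<noteq> 0"
    by (simp_all add: inner_seqs_def path_vertex_component)
  have "{y \<in> convex hull (path_vertex ed n ` ?X). y $ e = 0} facet_of convex hull (path_vertex ed n ` ?X)"
    by (rule facet_of_convex_hull_coordinate_if_rigid[OF _ x0 x1 path_vertex_cost_rigid[OF assms]])
      (simp add: path_vertex_component)
  with assms(1,2) show ?thesis
    by (simp add: path_polytope_eq)
qed

end
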